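(* Let $q\ge1$, $M>0$, and let $\{J_i\}_{i=1}^m$ be an assignment satisfying $\mathbb{E}\big[(\sum_{i=1}^m(\sum_{j\in J_i}Y_j)^q)^{1/q}\big]\le M$. Then $\sum_{i=1}^m\big(\sum_{j\in J_i}\mathbb{E}[Y'_j]\big)^q\le M^q$.
   Context: Nonnegative random variables $X_{ij}$ (size of job $j$ on machine $i$), independent across different jobs. For an assignment $\{J_i\}$ (partition of $[n]$), $Y_j:=X_{ij}$ where $j\in J_i$. Truncated part $Y'_j:=Y_j\mathbf{1}[Y_j\le M]$. *)

theory Defs
  imports "HOL-Probability.Probability"
begin

text \<open>Machines are indexed by i < m, jobs by j < n. X i j is the (random) size of
job j on machine i. An assignment is a family J i (i < m) partitioning {..<n}
(parts may be empty).\<close>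

definition is_assignment :: "nat \<Rightarrow> nat \<Rightarrow> (nat \<Rightarrow> nat set) \<Rightarrow> bool" where
  "is_assignment m n J \<longleftrightarrow>
     (\<Union>i<m. J i) = {..<n} \<and> (\<forall>i<m. \<forall>i'<m. i \<noteq> i' \<longrightarrow> J i \<inter> J i' = {})"

definition assigned_size ::
  "nat \<Rightarrow> (nat \<Rightarrow> nat set) \<Rightarrow> (nat \<Rightarrow> nat \<Rightarrow> 'a \<Rightarrow> real) \<Rightarrow> nat \<Rightarrow> 'a \<Rightarrow> real" where
  "assigned_size m J X j \<omega> = X (THE i. i < m \<and> j \<in> J i) j \<omega>"

definition truncated_size ::
  "real \<Rightarrow> nat \<Rightarrow> (nat \<Rightarrow> nat set) \<Rightarrow> (nat \<Rightarrow> nat \<Rightarrow> 'a \<Rightarrow> real) \<Rightarrow> nat \<Rightarrow> 'a \<Rightarrow> real" where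
  "truncated_size M m J X j \<omega> =
     (if assigned_size m J X j \<omega> \<le> M then assigned_size m J X j \<omega> else 0)"

end

theory Submission imports Defs begin

text \<open>Write |v|_q = (\<Sum>i. v_i^q)^(1/q). For nonnegative integrable Z_i, Jensen's inequality for
this norm gives |(E Z_i)_i|_q \<le> E |Z|_q. It follows by duality: with a_i = E Z_i and
S = \<Sum>i. a_i^q, Hoelder's inequality yields S = E[\<Sum>i. a_i^(q-1) Z_i] \<le> S^((q-1)/q) E |Z|_q.
Taking Z_i = \<Sum>j\<in>J_i. Y'_j \<le> \<Sum>j\<in>J_i. Y_j bounds the left-hand side by M^q. The truncation
only makes each Y'_j integrable.\<close>

lemma Youngs_inequality_tangent:
  fixes x y q :: real
  assumes "x \<ge> 0" "y \<ge> 0" "q \<ge> 1"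
  shows "q * x powr (q - 1) * y \<le> y powr q + (q - 1) * x powr q"
proof (cases "q = 1")
  case True
  then show ?thesis
    using assms by (cases "x = 0") auto
next
  case False
  with assms have q: "q > 1" by simp
  have "x powr (q - 1) * y \<le> (x powr (q - 1)) powr (q / (q - 1)) / (q / (q - 1)) + y powr q / q"
    by (rule Youngs_inequality) (use q assms in \<open>auto simp: field_simps\<close>)
  also have "(x powr (q - 1)) powr (q / (q - 1)) = x powr q"
    using q by (simp add: powr_powr)
  finally show ?thesis
    using q by (simp add: field_simps)
qed

lemma sum_powr_Hoelder:
  fixes a z :: "'i \<Rightarrow> real" and q :: real
  assumes "finite I" "q \<ge> 1"
    and a: "\<And>i. i \<in> I \<Longrightarrow> a i \<ge> 0" and z: "\<And>i. i \<in> I \<Longrightarrow> z i \<ge> 0"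
  shows "(\<Sum>i\<in>I. a i powr (q - 1) * z i)
           \<le> (\<Sum>i\<in>I. a i powr q) powr ((q - 1) / q) * (\<Sum>i\<in>I. z i powr q) powr (1 / q)"
proof -
  define s where "s = (\<Sum>i\<in>I. a i powr q) powr (1 / q)"
  define t where "t = (\<Sum>i\<in>I. z i powr q) powr (1 / q)"
  have s_powr: "s powr q = (\<Sum>i\<in>I. a i powr q)" and t_powr: "t powr q = (\<Sum>i\<in>I. z i powr q)"
    unfolding s_def t_def using \<open>q \<ge> 1\<close> by (simp_all add: powr_powr sum_nonneg)
  have s_root: "s powr (q - 1) = (\<Sum>i\<in>I. a i powr q) powr ((q - 1) / q)"
    unfolding s_def by (simp add: powr_powr sum_nonneg)
  consider "s = 0" | "t = 0" | "s > 0" "t > 0"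
    unfolding s_def t_def by fastforce
  then show ?thesis
  proof cases
    case 1
    then have "\<forall>i\<in>I. a i = 0"
      using s_powr \<open>finite I\<close> a by (simp add: sum_nonneg_eq_0_iff)
    then show ?thesis by simp
  next
    case 2
    then have "\<forall>i\<in>I. z i = 0"
      using t_powr \<open>finite I\<close> z by (simp add: sum_nonneg_eq_0_iff)
    then show ?thesis by simp
  next
    case 3
    \<comment> \<open>Apply the tangent inequality to the normalised vectors \<open>a/s\<close> and \<open>z/t\<close> and sum up.\<close>
    have "(\<Sum>i\<in>I. q * (a i / s) powr (q - 1) * (z i / t))
            \<le> (\<Sum>i\<in>I. (z i / t) powr q + (q - 1) * (a i / s) powr q)"
      using a z 3 \<open>q \<ge> 1\<close> by (intro sum_mono Youngs_inequality_tangent) auto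
    also have "\<dots> = (\<Sum>i\<in>I. z i powr q) / t powr q + (q - 1) * ((\<Sum>i\<in>I. a i powr q) / s powr q)"
      using a z 3 by (simp add: powr_divide sum.distrib sum_divide_distrib sum_distrib_left)
    also have "\<dots> = q"
      using 3 by (simp flip: s_powr t_powr)
    finally have "q / (s powr (q - 1) * t) * (\<Sum>i\<in>I. a i powr (q - 1) * z i) \<le> q"
      using a 3 by (simp add: powr_divide sum_distrib_left field_simps)
    then have "(\<Sum>i\<in>I. a i powr (q - 1) * z i) \<le> s powr (q - 1) * t"
      using \<open>q \<ge> 1\<close> 3 by (simp add: field_simps)
    then show ?thesis
      unfolding s_root t_def .
  qed
qed

lemma sum_powr_root_mono:
  fixes y z :: "'i \<Rightarrow> real"
  assumes "q > 0" "\<And>i. i \<in> I \<Longrightarrow> 0 \<le> z i \<and> z i \<le> y i"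
  shows "(\<Sum>i\<in>I. z i powr q) powr (1 / q) \<le> (\<Sum>i\<in>I. y i powr q) powr (1 / q)"
  using assms by (intro powr_mono2 sum_mono sum_nonneg) auto

lemma sum_powr_root_integral_le:
  fixes N :: "'a measure" and Z :: "'i \<Rightarrow> 'a \<Rightarrow> real"
  assumes "finite I" "q \<ge> 1"
    and int: "\<And>i. i \<in> I \<Longrightarrow> integrable N (Z i)"
    and nonneg: "\<And>i x. i \<in> I \<Longrightarrow> x \<in> space N \<Longrightarrow> Z i x \<ge> 0"
  shows "ennreal ((\<Sum>i\<in>I. (integral\<^sup>L N (Z i)) powr q) powr (1 / q))
           \<le> (\<integral>\<^sup>+ x. ennreal ((\<Sum>i\<in>I. Z i x powr q) powr (1 / q)) \<partial>N)"
proof -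
  define a where "a i = integral\<^sup>L N (Z i)" for i
  define S where "S = (\<Sum>i\<in>I. a i powr q)"
  define F where "F x = (\<Sum>i\<in>I. Z i x powr q) powr (1 / q)" for x
  have a_nonneg: "\<And>i. i \<in> I \<Longrightarrow> a i \<ge> 0"
    unfolding a_def using nonneg by (auto intro: integral_nonneg)
  show ?thesis
  proof (cases "S = 0")
    case True
    then show ?thesis
      unfolding S_def a_def by simp
  next
    case False
    then have S_pos: "S > 0"
      unfolding S_def by (simp add: order_le_neq_trans sum_nonneg)
    define G where "G x = (\<Sum>i\<in>I. a i powr (q - 1) * Z i x)" for x
    have "integral\<^sup>L N G = (\<Sum>i\<in>I. a i powr (q - 1) * a i)"
      unfolding G_def a_def using int by simp
    also have "\<dots> = S"
      unfolding S_def using a_nonneg \<open>q \<ge> 1\<close>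
      by (intro sum.cong refl) (metis diff_add_cancel powr_add powr_one powr_zero_eq_one)
    finally have "ennreal S = (\<integral>\<^sup>+ x. ennreal (G x) \<partial>N)"
      using int nonneg a_nonneg unfolding G_def
      by (subst nn_integral_eq_integral) (auto intro!: sum_nonneg)
    also have "\<dots> \<le> (\<integral>\<^sup>+ x. ennreal (S powr ((q - 1) / q)) * ennreal (F x) \<partial>N)"
    proof (intro nn_integral_mono)
      fix x assume "x \<in> space N"
      then have "G x \<le> S powr ((q - 1) / q) * F x"
        unfolding G_def S_def F_def
        using a_nonneg nonneg \<open>finite I\<close> \<open>q \<ge> 1\<close> by (intro sum_powr_Hoelder) auto
      then show "ennreal (G x) \<le> ennreal (S powr ((q - 1) / q)) * ennreal (F x)"
        by (simp add: F_def ennreal_leI flip: ennreal_mult)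
    qed
    also have "\<dots> = ennreal (S powr ((q - 1) / q)) * (\<integral>\<^sup>+ x. ennreal (F x) \<partial>N)"
      using int unfolding F_def
      by (intro nn_integral_cmult measurable_compose [OF _ measurable_ennreal] powr_real_measurable
          borel_measurable_sum borel_measurable_const) auto
    finally have "ennreal (S powr ((q - 1) / q)) * ennreal (S powr (1 / q))
                    \<le> ennreal (S powr ((q - 1) / q)) * (\<integral>\<^sup>+ x. ennreal (F x) \<partial>N)"
      using S_pos \<open>q \<ge> 1\<close>
      by (simp add: add_divide_distrib [symmetric] powr_add [symmetric] flip: ennreal_mult)
    then show ?thesis
      using S_pos unfolding S_def a_def F_def by (simp add: ennreal_mult_le_mult_iff)
  qed
qed

lemma assigned_size_eq:
  assumes "is_assignment m n J" "i < m" "j \<in> J i"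
  shows "assigned_size m J X j = X i j"
proof -
  have "(THE i'. i' < m \<and> j \<in> J i') = i"
    using assms unfolding is_assignment_def by (intro the_equality) blast+
  then show ?thesis
    unfolding assigned_size_def by simp
qed

lemma truncated_size_eq:
  assumes "is_assignment m n J" "i < m" "j \<in> J i"
  shows "truncated_size M m J X j = (\<lambda>\<omega>. if X i j \<omega> \<le> M then X i j \<omega> else 0)"
  by (simp add: fun_eq_iff truncated_size_def assigned_size_eq [OF assms])

theorem mainTheorem12:
  fixes P :: "'a measure" and X :: "nat \<Rightarrow> nat \<Rightarrow> 'a \<Rightarrow> real"
    and m n :: nat and J :: "nat \<Rightarrow> nat set" and q M :: real
  assumes "prob_space P"
    and meas: "\<And>i j. i < m \<Longrightarrow> j < n \<Longrightarrow> X i j \<in> borel_measurable P"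
    and nonneg: "\<And>i j \<omega>. i < m \<Longrightarrow> j < n \<Longrightarrow> \<omega> \<in> space P \<Longrightarrow> X i j \<omega> \<ge> 0"
    and indep: "prob_space.indep_vars P (\<lambda>_. PiM {..<m} (\<lambda>_. borel))
                  (\<lambda>j \<omega>. \<lambda>i\<in>{..<m}. X i j \<omega>) {..<n}"
    and "q \<ge> 1" and "M > 0"
    and "is_assignment m n J"
    and hyp: "(\<integral>\<^sup>+ \<omega>. ennreal ((\<Sum>i<m. (\<Sum>j\<in>J i. assigned_size m J X j \<omega>) powr q) powr (1 / q)) \<partial>P)
              \<le> ennreal M"
  shows "(\<Sum>i<m. (\<Sum>j\<in>J i. integral\<^sup>L P (truncated_size M m J X j)) powr q) \<le> M powr q"
proof -
  interpret prob_space P by fact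
  define Y where "Y = assigned_size m J X"
  define T where "T = truncated_size M m J X"
  define Z where "Z i \<omega> = (\<Sum>j\<in>J i. T j \<omega>)" for i \<omega>
  have J_sub: "J i \<subseteq> {..<n}" if "i < m" for i
    using \<open>is_assignment m n J\<close> that unfolding is_assignment_def by blast
  have T_int: "integrable P (T j)" and T_bounds: "\<And>\<omega>. \<omega> \<in> space P \<Longrightarrow> 0 \<le> T j \<omega> \<and> T j \<omega> \<le> Y j \<omega>"
    if "i < m" "j \<in> J i" for i j
    using truncated_size_eq [OF \<open>is_assignment m n J\<close> that, of M X]
      assigned_size_eq [OF \<open>is_assignment m n J\<close> that, of X]
      meas [of i j] nonneg [of i j] J_sub [of i] that \<open>M > 0\<close>
    unfolding T_def Y_def by (auto intro!: integrable_const_bound [where B = M])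
  have Z_int: "integrable P (Z i)" and Z_eq: "integral\<^sup>L P (Z i) = (\<Sum>j\<in>J i. integral\<^sup>L P (T j))"
    if "i < m" for i
    unfolding Z_def using T_int that by auto
  have "ennreal ((\<Sum>i<m. (\<Sum>j\<in>J i. integral\<^sup>L P (T j)) powr q) powr (1 / q))
          \<le> (\<integral>\<^sup>+ \<omega>. ennreal ((\<Sum>i<m. Z i \<omega> powr q) powr (1 / q)) \<partial>P)"
    using sum_powr_root_integral_le [of "{..<m}" q P Z] Z_int Z_eq T_bounds \<open>q \<ge> 1\<close>
    unfolding Z_def by (fastforce intro: sum_nonneg)
  also have "\<dots> \<le> (\<integral>\<^sup>+ \<omega>. ennreal ((\<Sum>i<m. (\<Sum>j\<in>J i. Y j \<omega>) powr q) powr (1 / q)) \<partial>P)"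
    using T_bounds \<open>q \<ge> 1\<close> unfolding Z_def
    by (intro nn_integral_mono ennreal_leI sum_powr_root_mono) (auto intro!: sum_nonneg sum_mono)
  also have "\<dots> \<le> ennreal M"
    using hyp unfolding Y_def .
  finally have "(\<Sum>i<m. (\<Sum>j\<in>J i. integral\<^sup>L P (T j)) powr q) powr (1 / q) \<le> M"
    using \<open>M > 0\<close> by simp
  then have "((\<Sum>i<m. (\<Sum>j\<in>J i. integral\<^sup>L P (T j)) powr q) powr (1 / q)) powr q \<le> M powr q"
    using \<open>q \<ge> 1\<close> by (intro powr_mono2) auto
  then show ?thesis
    using \<open>q \<ge> 1\<close> unfolding T_def by (simp add: powr_powr sum_nonneg)
qed

end
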